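(* Let $f$ be a face of a regular polygon surface all of whose faces have degree five. If $f$ has positive facial curvature, then every vertex incident to $f$ has degree three. Moreover, if $f$ is incident to a vertex of negative vertex curvature, then $f$ has non-positive facial curvature.
   Context: A regular polygon surface (RPS) is a triple $(\Sigma,\Gamma,\psi)$ where $\Gamma$ is a finite graph embedded in a closed surface $\Sigma$ so that every face (component of $\Sigma\setminus\Gamma$) has closure a closed $2$-cell, the closures of two faces meet in the empty set, a vertex, or an edge, and $\psi:\Sigma\to\mathbb{R}^3$ is continuous and maps each face of degree $k$ (number of incident edges) onto a regular Euclidean $k$-gon with unit edge lengths; the images of two adjacent faces meet in exactly one vertex or exactly one edge with its endpoints. The vertex curvature $k_v$ of a vertex $v$ is $2\pi$ minus the sum, over faces containing $v$, of the interior angle at $v$ of the regular polygon that is the image of that face. The facial curvature of a face $f$ is $k_f=\sum_{v\in f} k_v/d_v$, summing over vertices $v$ incident to $f$, where $d_v$ is the degree of $v$. *)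

theory Defs
  imports "HOL-Analysis.Analysis"
begin

text \<open>Faces are indexed by a finite set F; bd f is the boundary cycle of face f
  (list of its vertices in cyclic order). p gives the positions in R^3 of the
  vertices under the realisation psi.\<close>

definition face_edges :: "('f \<Rightarrow> 'v list) \<Rightarrow> 'f \<Rightarrow> 'v set set" where
  "face_edges bd f =
     {{bd f ! i, bd f ! ((i + 1) mod length (bd f))} | i. i < length (bd f)}"

definition rps_vertices :: "'f set \<Rightarrow> ('f \<Rightarrow> 'v list) \<Rightarrow> 'v set" where
  "rps_vertices F bd = (\<Union>f\<in>F. set (bd f))"

definition rps_edges :: "'f set \<Rightarrow> ('f \<Rightarrow> 'v list) \<Rightarrow> 'v set set" where
  "rps_edges F bd = (\<Union>f\<in>F. face_edges bd f)"

definition faces_at :: "'f set \<Rightarrow> ('f \<Rightarrow> 'v list) \<Rightarrow> 'v \<Rightarrow> 'f set" where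
  "faces_at F bd v = {f\<in>F. v \<in> set (bd f)}"

definition vdeg :: "'f set \<Rightarrow> ('f \<Rightarrow> 'v list) \<Rightarrow> 'v \<Rightarrow> nat" where
  "vdeg F bd v = card {e \<in> rps_edges F bd. v \<in> e}"

text \<open>The list xs of points is (in this cyclic order) the vertex list of a regular
  Euclidean k-gon with unit edge length, k = length xs.\<close>
definition regular_unit_polygon :: "(real^3) list \<Rightarrow> bool" where
  "regular_unit_polygon xs \<longleftrightarrow>
     (let k = length xs in k \<ge> 3 \<and>
       (\<exists>c u w. norm u = 1 \<and> norm w = 1 \<and> inner u w = 0 \<and>
          (\<forall>j<k. xs ! j = c + (1 / (2 * sin (pi / real k))) *\<^sub>R
                 (cos (2 * pi * real j / real k) *\<^sub>R u + sin (2 * pi * real j / real k) *\<^sub>R w))))"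

definition reg_angle :: "nat \<Rightarrow> real" where
  "reg_angle k = (real k - 2) * pi / real k"

definition is_rps :: "'f set \<Rightarrow> ('f \<Rightarrow> 'v list) \<Rightarrow> ('v \<Rightarrow> real^3) \<Rightarrow> bool" where
  "is_rps F bd p \<longleftrightarrow>
     finite F \<and> F \<noteq> {} \<and>
     \<comment> \<open>each face closure is a closed 2-cell bounded by a simple cycle\<close>
     (\<forall>f\<in>F. distinct (bd f) \<and> length (bd f) \<ge> 3) \<and>
     \<comment> \<open>closed surface: every edge borders exactly two faces\<close>
     (\<forall>f\<in>F. \<forall>e\<in>face_edges bd f. card {g\<in>F. e \<in> face_edges bd g} = 2) \<and>
     \<comment> \<open>closed surface: the faces around each vertex form a single cycle (connected link)\<close>
     (\<forall>v\<in>rps_vertices F bd. \<forall>S. S \<subseteq> faces_at F bd v \<and> S \<noteq> {} \<and>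
        (\<forall>f\<in>S. \<forall>g\<in>faces_at F bd v.
            (\<exists>e. v \<in> e \<and> e \<in> face_edges bd f \<and> e \<in> face_edges bd g) \<longrightarrow> g \<in> S)
        \<longrightarrow> S = faces_at F bd v) \<and>
     \<comment> \<open>closures of two distinct faces meet in nothing, a vertex, or an edge\<close>
     (\<forall>f\<in>F. \<forall>g\<in>F. f \<noteq> g \<longrightarrow>
        (let I = set (bd f) \<inter> set (bd g) in
          I = {} \<or> (\<exists>v. I = {v}) \<or> (I \<in> face_edges bd f \<and> I \<in> face_edges bd g))) \<and>
     \<comment> \<open>realisation: each face is mapped onto a regular unit polygon\<close>
     (\<forall>f\<in>F. regular_unit_polygon (map p (bd f))) \<and>
     \<comment> \<open>images of adjacent faces meet exactly in the image of the common vertex / edge\<close>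
     (\<forall>f\<in>F. \<forall>g\<in>F. f \<noteq> g \<longrightarrow> set (bd f) \<inter> set (bd g) \<noteq> {} \<longrightarrow>
        convex hull (p ` set (bd f)) \<inter> convex hull (p ` set (bd g))
          = convex hull (p ` (set (bd f) \<inter> set (bd g))))"

definition vertex_curvature :: "'f set \<Rightarrow> ('f \<Rightarrow> 'v list) \<Rightarrow> 'v \<Rightarrow> real" where
  "vertex_curvature F bd v =
     2 * pi - (\<Sum>f\<in>faces_at F bd v. reg_angle (length (bd f)))"

definition facial_curvature :: "'f set \<Rightarrow> ('f \<Rightarrow> 'v list) \<Rightarrow> 'f \<Rightarrow> real" where
  "facial_curvature F bd f =
     (\<Sum>v\<in>set (bd f). vertex_curvature F bd v / real (vdeg F bd v))"

end

theory Submission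
  imports Defs
begin

text \<open>All faces are regular pentagons, so a vertex meeting d faces contributes
  2 pi / d - 3 pi / 5 to the facial curvature: pi / 15 if d = 3 and at most - pi / 10 if d \<ge> 4.
  Hence a face with two vertices of degree other than 3 has non-positive facial curvature, and
  both claims follow (a vertex of negative curvature has degree at least 4) once we show that a
  face cannot have exactly one such vertex.
  Suppose the vertices v1, ..., v4 of the face f = v0 v1 v2 v3 v4 have degree 3, and let G0, ..., G4
  be the faces across the edges of f; consecutive ones share a third edge at v1, ..., v4.
  In a regular pentagon each diagonal is parallel to the opposite side, with ratio
  1 + 2 cos (2 pi / 5), so these five relations telescope around the ring: the neighbours of v0
  in G0 and in G4 other than v1 and v4 have the same image in space. Since the images of two
  faces meet exactly in the image of their common vertex or edge, the two neighbours coincide,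
  and as the link of v0 is connected, f, G0 and G4 are the only faces at v0.\<close>

lemma orthonormal_coeffs_unique:
  fixes u w :: "'a::real_inner"
  assumes "norm u = 1" "norm w = 1" "inner u w = 0"
    and "a *\<^sub>R u + b *\<^sub>R w = a' *\<^sub>R u + b' *\<^sub>R w"
  shows "a = a'" "b = b'"
proof -
  have coeffs: "inner u (s *\<^sub>R u + t *\<^sub>R w) = s" "inner w (s *\<^sub>R u + t *\<^sub>R w) = t" for s t
    using assms(1-3) by (simp_all add: inner_add_right inner_commute power2_norm_eq_inner[symmetric])
  show "a = a'" "b = b'" using coeffs[of a b] coeffs[of a' b'] assms(4) by simp_all
qed

lemma circle_second_difference:
  fixes c u w :: "'a::real_vector" and r :: real
  defines "q \<equiv> \<lambda>a. c + r *\<^sub>R (cos a *\<^sub>R u + sin a *\<^sub>R w)"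
  shows "q a + q (a + 2 * t) - (2 * cos t) *\<^sub>R q (a + t) = (2 - 2 * cos t) *\<^sub>R c"
proof -
  have mid: "(a + (a + 2 * t)) / 2 = a + t" "(a - (a + 2 * t)) / 2 = - t" by simp_all
  have "cos a + cos (a + 2 * t) = 2 * cos t * cos (a + t)"
    using cos_plus_cos[of a "a + 2 * t"] unfolding mid by simp
  moreover have "sin a + sin (a + 2 * t) = 2 * cos t * sin (a + t)"
    using sin_plus_sin[of a "a + 2 * t"] unfolding mid by simp
  moreover have "q a + q (a + 2 * t) - (2 * cos t) *\<^sub>R q (a + t) = (2 - 2 * cos t) *\<^sub>R c
      + r *\<^sub>R ((cos a + cos (a + 2 * t) - 2 * cos t * cos (a + t)) *\<^sub>R u
                 + (sin a + sin (a + 2 * t) - 2 * cos t * sin (a + t)) *\<^sub>R w)"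
    unfolding q_def by (simp add: algebra_simps scaleR_add_left scaleR_diff_left scaleR_2)
  ultimately show ?thesis by simp
qed

lemma regular_unit_polygon_on_circle:
  assumes "regular_unit_polygon xs"
  obtains c u w :: "real^3" and r :: real
  where "norm u = 1" "norm w = 1" "inner u w = 0" "r \<noteq> 0" "length xs \<ge> 3"
    "\<And>j. xs ! (j mod length xs) = c + r *\<^sub>R
           (cos (2 * pi * j / length xs) *\<^sub>R u + sin (2 * pi * j / length xs) *\<^sub>R w)"
proof -
  define k where "k = length xs"
  obtain c u w where k3: "k \<ge> 3" and uw: "norm u = 1" "norm w = 1" "inner u w = 0"
    and vertex: "\<And>j. j < k \<Longrightarrow> xs ! j = c + (1 / (2 * sin (pi / k))) *\<^sub>R
                 (cos (2 * pi * j / k) *\<^sub>R u + sin (2 * pi * j / k) *\<^sub>R w)"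
    using assms unfolding regular_unit_polygon_def Let_def k_def by blast
  have "sin (pi / k) > 0" using k3 by (intro sin_gt_zero) (auto simp: field_simps)
  then have r: "1 / (2 * sin (pi / k)) \<noteq> 0" by simp
  have periodic: "sin (2 * pi * j / k) = sin (2 * pi * (j mod k) / k) \<and>
                  cos (2 * pi * j / k) = cos (2 * pi * (j mod k) / k)" for j
  proof -
    have "real j = real (j mod k) + real (j div k) * k"
      by (metis add.commute mod_div_mult_eq of_nat_add of_nat_mult)
    then have "2 * pi * j / k = 2 * pi * (j mod k) / k + 2 * pi * int (j div k)"
      using k3 by (simp add: field_simps)
    then show ?thesis by (subst sin_cos_eq_iff) blast
  qed
  have on_circle: "xs ! (j mod k) = c + (1 / (2 * sin (pi / k))) *\<^sub>R
           (cos (2 * pi * j / k) *\<^sub>R u + sin (2 * pi * j / k) *\<^sub>R w)" for j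
  proof -
    have "j mod k < k" using k3 by simp
    then show ?thesis using vertex periodic[of j] by simp
  qed
  show ?thesis using that[OF uw r] k3 on_circle unfolding k_def by blast
qed

lemma regular_polygon_diagonal_parallel:
  assumes "regular_unit_polygon xs" and "k = length xs"
  shows "xs ! ((j + 3) mod k) - xs ! (j mod k)
           = (1 + 2 * cos (2 * pi / k)) *\<^sub>R (xs ! ((j + 2) mod k) - xs ! ((j + 1) mod k))"
proof -
  obtain c u w :: "real^3" and r :: real where k3: "k \<ge> 3"
    and vertex: "\<And>j. xs ! (j mod k) = c + r *\<^sub>R
           (cos (2 * pi * j / k) *\<^sub>R u + sin (2 * pi * j / k) *\<^sub>R w)"
    using regular_unit_polygon_on_circle[OF assms(1)] assms(2) by metis
  define t where "t = 2 * pi / k"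
  define \<tau> where "\<tau> = 2 * cos t"
  define q where "q = (\<lambda>a. c + r *\<^sub>R (cos a *\<^sub>R u + sin a *\<^sub>R w))"
  define a where "a = 2 * pi * j / k"
  have x: "xs ! ((j + n) mod k) = q (a + n * t)" for n
    using k3 unfolding vertex q_def t_def a_def by (simp add: field_simps)
  have three_term: "q b + q (b + 2 * t) - \<tau> *\<^sub>R q (b + t) = (2 - \<tau>) *\<^sub>R c" for b
    unfolding q_def \<tau>_def by (rule circle_second_difference)
  have step: "x3 - x0 = (1 + \<tau>) *\<^sub>R (x2 - x1)"
    if "x0 + x2 - \<tau> *\<^sub>R x1 = K" "x1 + x3 - \<tau> *\<^sub>R x2 = K" for x0 x1 x2 x3 K :: "real^3"
  proof -
    have "x3 - x0 = (x1 + x3 - \<tau> *\<^sub>R x2) - (x0 + x2 - \<tau> *\<^sub>R x1) + (1 + \<tau>) *\<^sub>R (x2 - x1)"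
      by (simp add: algebra_simps scaleR_add_left)
    then show ?thesis using that by simp
  qed
  have "xs ! ((j + 0) mod k) + xs ! ((j + 2) mod k) - \<tau> *\<^sub>R xs ! ((j + 1) mod k)
      = (2 - \<tau>) *\<^sub>R c"
    using three_term[of a] unfolding x by simp
  moreover have "xs ! ((j + 1) mod k) + xs ! ((j + 3) mod k) - \<tau> *\<^sub>R xs ! ((j + 2) mod k)
      = (2 - \<tau>) *\<^sub>R c"
    using three_term[of "a + t"] unfolding x by (simp add: algebra_simps)
  ultimately show ?thesis using step unfolding t_def \<tau>_def by (metis add_0_right)
qed

lemma regular_polygon_adjacent_distinct:
  assumes "regular_unit_polygon xs" and "k = length xs"
  shows "xs ! (j mod k) \<noteq> xs ! (Suc j mod k)"
proof
  obtain c u w :: "real^3" and r :: real where uw: "norm u = 1" "norm w = 1" "inner u w = 0"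
    and r: "r \<noteq> 0" and k3: "k \<ge> 3"
    and vertex: "\<And>j. xs ! (j mod k) = c + r *\<^sub>R
           (cos (2 * pi * j / k) *\<^sub>R u + sin (2 * pi * j / k) *\<^sub>R w)"
    using regular_unit_polygon_on_circle[OF assms(1)] assms(2) by metis
  define a where "a = 2 * pi * j / k"
  define b where "b = 2 * pi * Suc j / k"
  assume "xs ! (j mod k) = xs ! (Suc j mod k)"
  then have "cos a *\<^sub>R u + sin a *\<^sub>R w = cos b *\<^sub>R u + sin b *\<^sub>R w"
    using r unfolding vertex a_def b_def by simp
  then have "sin b = sin a \<and> cos b = cos a"
    using orthonormal_coeffs_unique[OF uw] by metis
  then obtain n :: int where "b = a + 2 * pi * n" by (auto simp: sin_cos_eq_iff)
  then have "real_of_int n = 1 / k"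
    using k3 unfolding a_def b_def by (simp add: field_simps)
  then have "0 < real_of_int n" "real_of_int n < 1" using k3 by simp_all
  then have "0 < n" "n < 1" by simp_all
  then show False by simp
qed

lemma finite_face_edges: "finite (face_edges bd g)"
  unfolding face_edges_def by simp

lemma face_edge_nth_iff:
  assumes "distinct (bd g)" "i < length (bd g)" "j < length (bd g)"
  shows "{bd g ! i, bd g ! j} \<in> face_edges bd g \<longleftrightarrow>
           j = Suc i mod length (bd g) \<or> i = Suc j mod length (bd g)"
proof
  assume "{bd g ! i, bd g ! j} \<in> face_edges bd g"
  then obtain l where l: "l < length (bd g)"
    and lr: "{bd g ! i, bd g ! j} = {bd g ! l, bd g ! (Suc l mod length (bd g))}"
    unfolding face_edges_def by auto
  have l': "Suc l mod length (bd g) < length (bd g)" using l by (intro mod_less_divisor) linarith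
  have inj: "a = b" if "bd g ! a = bd g ! b" "a < length (bd g)" "b < length (bd g)" for a b
    using nth_eq_iff_index_eq[OF assms(1)] that by blast
  from lr have "bd g ! i = bd g ! l \<and> bd g ! j = bd g ! (Suc l mod length (bd g)) \<or>
                bd g ! i = bd g ! (Suc l mod length (bd g)) \<and> bd g ! j = bd g ! l"
    by (simp add: doubleton_eq_iff)
  then have "i = l \<and> j = Suc l mod length (bd g) \<or> i = Suc l mod length (bd g) \<and> j = l"
    using inj[OF _ assms(2) l] inj[OF _ assms(3) l'] inj[OF _ assms(2) l'] inj[OF _ assms(3) l] by blast
  then show "j = Suc i mod length (bd g) \<or> i = Suc j mod length (bd g)" by blast
next
  have edge: "{bd g ! l, bd g ! (Suc l mod length (bd g))} \<in> face_edges bd g"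
    if "l < length (bd g)" for l
    unfolding face_edges_def using that by auto
  assume "j = Suc i mod length (bd g) \<or> i = Suc j mod length (bd g)"
  then show "{bd g ! i, bd g ! j} \<in> face_edges bd g"
  proof
    assume "j = Suc i mod length (bd g)"
    then show ?thesis using edge[OF assms(2)] by simp
  next
    assume "i = Suc j mod length (bd g)"
    then show ?thesis using edge[OF assms(3)] by (simp add: insert_commute)
  qed
qed

lemma face_edge_vertices:
  assumes "e \<in> face_edges bd g"
  obtains a b where "e = {a, b}" "a \<in> set (bd g)" "b \<in> set (bd g)"
proof -
  obtain l where l: "l < length (bd g)" and e: "e = {bd g ! l, bd g ! (Suc l mod length (bd g))}"
    using assms unfolding face_edges_def by auto
  have l': "Suc l mod length (bd g) < length (bd g)" using l by (intro mod_less_divisor) linarith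
  show ?thesis by (rule that[OF e nth_mem nth_mem]) (fact l l')+
qed

lemma face_edge_endpoints:
  assumes "{a, b} \<in> face_edges bd g"
  shows "a \<in> set (bd g)" "b \<in> set (bd g)"
proof -
  obtain a' b' where "{a, b} = {a', b'}" "a' \<in> set (bd g)" "b' \<in> set (bd g)"
    using face_edge_vertices[OF assms] .
  then show "a \<in> set (bd g)" "b \<in> set (bd g)" by (auto simp: doubleton_eq_iff)
qed

lemma face_edge_at_vertex:
  assumes "e \<in> face_edges bd g" "v \<in> e"
  obtains w where "e = {v, w}"
proof -
  obtain a b where "e = {a, b}" using face_edge_vertices[OF assms(1)] by metis
  then show ?thesis using that assms(2) by (auto simp: insert_commute)
qed

locale regular_polygon_surface =
  fixes F :: "'f set" and bd :: "'f \<Rightarrow> 'v list" and p :: "'v \<Rightarrow> real^3"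
  assumes is_rps: "is_rps F bd p"
begin

abbreviation E :: "'f \<Rightarrow> 'v set set" where "E \<equiv> face_edges bd"
abbreviation N :: "'v \<Rightarrow> 'f set" where "N \<equiv> faces_at F bd"

lemma finite_faces: "finite F"
  using is_rps unfolding is_rps_def by (elim conjE)

lemma finite_faces_at: "finite (N v)"
  unfolding faces_at_def using finite_faces by simp

lemma face_distinct: "g \<in> F \<Longrightarrow> distinct (bd g)"
  using is_rps unfolding is_rps_def by (elim conjE) simp

lemma card_faces_on_edge: "g \<in> F \<Longrightarrow> e \<in> E g \<Longrightarrow> card {h \<in> F. e \<in> E h} = 2"
  using is_rps unfolding is_rps_def by (elim conjE) simp

lemma face_intersection_cases:
  assumes "g \<in> F" "h \<in> F" "g \<noteq> h"
  shows "set (bd g) \<inter> set (bd h) = {} \<or> (\<exists>v. set (bd g) \<inter> set (bd h) = {v}) \<or>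
         set (bd g) \<inter> set (bd h) \<in> E g \<and> set (bd g) \<inter> set (bd h) \<in> E h"
proof -
  have "\<forall>f\<in>F. \<forall>g\<in>F. f \<noteq> g \<longrightarrow> (let I = set (bd f) \<inter> set (bd g) in
          I = {} \<or> (\<exists>v. I = {v}) \<or> (I \<in> E f \<and> I \<in> E g))"
    using is_rps unfolding is_rps_def by (elim conjE)
  then show ?thesis using assms unfolding Let_def by blast
qed

lemma face_hull_intersection:
  assumes "g \<in> F" "h \<in> F" "g \<noteq> h" "set (bd g) \<inter> set (bd h) \<noteq> {}"
  shows "convex hull (p ` set (bd g)) \<inter> convex hull (p ` set (bd h))
           = convex hull (p ` (set (bd g) \<inter> set (bd h)))"
proof -
  have "\<forall>f\<in>F. \<forall>g\<in>F. f \<noteq> g \<longrightarrow> set (bd f) \<inter> set (bd g) \<noteq> {} \<longrightarrow>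
        convex hull (p ` set (bd f)) \<inter> convex hull (p ` set (bd g))
          = convex hull (p ` (set (bd f) \<inter> set (bd g)))"
    using is_rps unfolding is_rps_def by (elim conjE)
  then show ?thesis using assms by blast
qed

lemma face_regular: "g \<in> F \<Longrightarrow> regular_unit_polygon (map p (bd g))"
  using is_rps unfolding is_rps_def by (elim conjE) simp

lemma face_across_edge:
  assumes "g \<in> F" "e \<in> E g"
  obtains h where "h \<in> F" "h \<noteq> g" "e \<in> E h"
proof -
  obtain a b where ab: "{h \<in> F. e \<in> E h} = {a, b}" "a \<noteq> b"
    using card_faces_on_edge[OF assms] card_2_iff by metis
  then have "g = a \<or> g = b" using assms by blast
  then show ?thesis using that ab by blast
qed

lemma faces_on_edge:
  assumes "g \<in> F" "h \<in> F" "g \<noteq> h" "e \<in> E g" "e \<in> E h" "k \<in> F" "e \<in> E k"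
  shows "k = g \<or> k = h"
proof (rule ccontr)
  assume "\<not> (k = g \<or> k = h)"
  then have "card {g, h, k} = 3" using assms(3) by auto
  moreover have "{g, h, k} \<subseteq> {l \<in> F. e \<in> E l}" using assms by auto
  moreover have "finite {l \<in> F. e \<in> E l}" using finite_faces by simp
  ultimately have "3 \<le> card {l \<in> F. e \<in> E l}" by (metis card_mono)
  then show False using card_faces_on_edge[OF assms(1,4)] by simp
qed

lemma three_common_vertices_imp_eq:
  assumes "g \<in> F" "h \<in> F" "{x, y, z} \<subseteq> set (bd g) \<inter> set (bd h)" "x \<noteq> y" "y \<noteq> z" "x \<noteq> z"
  shows "g = h"
proof (rule ccontr)
  assume "g \<noteq> h"
  with assms(1,2) consider "set (bd g) \<inter> set (bd h) = {}" | v where "set (bd g) \<inter> set (bd h) = {v}"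
    | "set (bd g) \<inter> set (bd h) \<in> E g"
    using face_intersection_cases by blast
  then show False
  proof cases
    case 3
    then obtain a b where "set (bd g) \<inter> set (bd h) = {a, b}" by (rule face_edge_vertices)
    then show False using assms(3-6) by auto
  qed (use assms(3-6) in auto)
qed

lemma faces_at_eq_if_closed:
  assumes "f \<in> S" "S \<subseteq> N v"
    and closed: "\<And>g e. g \<in> S \<Longrightarrow> e \<in> E g \<Longrightarrow> v \<in> e \<Longrightarrow> \<exists>h\<in>S. h \<noteq> g \<and> e \<in> E h"
  shows "S = N v"
proof -
  have link: "\<forall>v\<in>rps_vertices F bd. \<forall>S. S \<subseteq> N v \<and> S \<noteq> {} \<and>
        (\<forall>f\<in>S. \<forall>g\<in>N v. (\<exists>e. v \<in> e \<and> e \<in> E f \<and> e \<in> E g) \<longrightarrow> g \<in> S) \<longrightarrow> S = N v"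
    using is_rps unfolding is_rps_def by (elim conjE)
  have v: "v \<in> rps_vertices F bd" using assms(1,2) unfolding rps_vertices_def faces_at_def by blast
  have closed_link: "\<forall>g\<in>S. \<forall>g'\<in>N v. (\<exists>e. v \<in> e \<and> e \<in> E g \<and> e \<in> E g') \<longrightarrow> g' \<in> S"
  proof (intro ballI impI)
    fix g g' assume g: "g \<in> S" and g': "g' \<in> N v" and "\<exists>e. v \<in> e \<and> e \<in> E g \<and> e \<in> E g'"
    then obtain e where e: "v \<in> e" "e \<in> E g" "e \<in> E g'" by blast
    obtain h where h: "h \<in> S" "h \<noteq> g" "e \<in> E h" using closed g e by blast
    have "g \<in> F" "h \<in> F" "g' \<in> F" using assms(2) g g' h(1) unfolding faces_at_def by auto
    then have "g' = g \<or> g' = h" using faces_on_edge h e by metis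
    then show "g' \<in> S" using g h(1) by blast
  qed
  show ?thesis
  proof (rule link[rule_format, OF v], intro conjI)
    show "S \<noteq> {}" using assms(1) by blast
  qed (fact assms(2) closed_link)+
qed

lemma face_edge_images_distinct:
  assumes "g \<in> F" "{a, b} \<in> E g"
  shows "p a \<noteq> p b"
proof -
  obtain l where l: "l < length (bd g)" and ab: "{a, b} = {bd g ! l, bd g ! (Suc l mod length (bd g))}"
    using assms(2) unfolding face_edges_def by auto
  have "Suc l mod length (bd g) < length (bd g)" using l by (intro mod_less_divisor) linarith
  then have "p (bd g ! l) \<noteq> p (bd g ! (Suc l mod length (bd g)))"
    using regular_polygon_adjacent_distinct[OF face_regular[OF assms(1)], of "length (bd g)" l] l
    by simp
  then show ?thesis using ab by (auto simp: doubleton_eq_iff)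
qed

lemma face_edge_endpoints_distinct: "g \<in> F \<Longrightarrow> {a, b} \<in> E g \<Longrightarrow> a \<noteq> b"
  using face_edge_images_distinct by blast

end

lemma nat_less_5_cases: "i < (5::nat) \<Longrightarrow> i = 0 \<or> i = 1 \<or> i = 2 \<or> i = 3 \<or> i = 4"
  by linarith

locale pentagonal_surface = regular_polygon_surface +
  assumes pentagonal: "\<forall>g\<in>F. length (bd g) = 5"
begin

lemma face_vertex_index:
  assumes "g \<in> F" "x \<in> set (bd g)"
  obtains i where "i < 5" "x = bd g ! i"
  using assms pentagonal by (metis in_set_conv_nth)

lemma face_nth_eq_iff:
  assumes "g \<in> F" "i < 5" "j < 5"
  shows "bd g ! i = bd g ! j \<longleftrightarrow> i = j"
  using nth_eq_iff_index_eq[OF face_distinct[OF assms(1)]] pentagonal assms by simp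

lemma face_edge_index_iff:
  assumes "g \<in> F" "i < 5" "j < 5"
  shows "{bd g ! i, bd g ! j} \<in> E g \<longleftrightarrow> j = Suc i mod 5 \<or> i = Suc j mod 5"
  using face_edge_nth_iff[of bd g, OF face_distinct[OF assms(1)]] pentagonal assms by simp

lemma face_edge_at_index:
  assumes "g \<in> F" "i < 5" "{bd g ! i, y} \<in> E g"
  obtains k where "k < 5" "y = bd g ! k" "k = Suc i mod 5 \<or> k = (i + 4) mod 5"
proof -
  obtain k where k: "k < 5" "y = bd g ! k"
    using face_vertex_index[OF assms(1) face_edge_endpoints(2)[OF assms(3)]] .
  then have "k = Suc i mod 5 \<or> i = Suc k mod 5" using assms face_edge_index_iff by blast
  then have "k = Suc i mod 5 \<or> k = (i + 4) mod 5"
    using nat_less_5_cases[OF assms(2)] nat_less_5_cases[OF k(1)] by (elim disjE) simp_all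
  then show ?thesis using that k by blast
qed

lemma neighbours_in_face:
  assumes "g \<in> F" "{v, x} \<in> E g" "{v, y} \<in> E g" "{v, z} \<in> E g" "x \<noteq> y"
  shows "z = x \<or> z = y"
proof -
  obtain i where i: "i < 5" "v = bd g ! i"
    using face_vertex_index[OF assms(1) face_edge_endpoints(1)[OF assms(2)]] .
  obtain j where j: "x = bd g ! j" "j = Suc i mod 5 \<or> j = (i + 4) mod 5"
    using face_edge_at_index assms(1,2) i by metis
  obtain k where k: "y = bd g ! k" "k = Suc i mod 5 \<or> k = (i + 4) mod 5"
    using face_edge_at_index assms(1,3) i by metis
  obtain l where l: "z = bd g ! l" "l = Suc i mod 5 \<or> l = (i + 4) mod 5"
    using face_edge_at_index assms(1,4) i by metis
  show ?thesis using assms(5) j k l by auto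
qed

lemma two_neighbours_in_face:
  assumes "g \<in> F" "v \<in> set (bd g)"
  obtains x y where "x \<noteq> y" "{v, x} \<in> E g" "{v, y} \<in> E g"
proof -
  obtain i where i: "i < 5" "v = bd g ! i" using face_vertex_index[OF assms] .
  define j k where "j = Suc i mod 5" and "k = (i + 4) mod 5"
  have jk: "j < 5" "k < 5" "j \<noteq> k" "j = Suc i mod 5" "i = Suc k mod 5"
    using nat_less_5_cases[OF i(1)] unfolding j_def k_def by (elim disjE; simp)+
  have "bd g ! j \<noteq> bd g ! k" using face_nth_eq_iff[OF assms(1)] jk by simp
  moreover have "{v, bd g ! j} \<in> E g" "{v, bd g ! k} \<in> E g"
    using face_edge_index_iff[OF assms(1)] i jk by simp_all
  ultimately show ?thesis using that by blast
qed

lemma pentagon_around_vertex: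
  assumes "g \<in> F" "v \<in> set (bd g)"
  obtains v1 v2 v3 v4 where "distinct [v, v1, v2, v3, v4]"
    "{v, v1} \<in> E g" "{v1, v2} \<in> E g" "{v2, v3} \<in> E g" "{v3, v4} \<in> E g" "{v4, v} \<in> E g"
proof -
  obtain i where i: "i < 5" "v = bd g ! i" using face_vertex_index[OF assms] .
  define c where "c t = bd g ! ((i + t) mod 5)" for t
  have v: "v = c 0" unfolding c_def using i by simp
  have "distinct [c 0, c 1, c 2, c 3, c 4]"
    using nat_less_5_cases[OF i(1)] unfolding c_def by (elim disjE) (simp_all add: face_nth_eq_iff[OF assms(1)])
  moreover have edge: "{c t, c (Suc t)} \<in> E g" for t
  proof -
    have "(i + t) mod 5 < 5" "(i + Suc t) mod 5 = Suc ((i + t) mod 5) mod 5" by (simp_all add: mod_Suc_eq)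
    then show ?thesis unfolding c_def using face_edge_index_iff[OF assms(1)] by simp
  qed
  moreover have "{c 4, c 0} \<in> E g" using edge[of 4] unfolding c_def by simp
  ultimately show ?thesis
    using that[of "c 1" "c 2" "c 3" "c 4"] edge[of 0] edge[of 1] edge[of 2] edge[of 3]
    unfolding v by (simp add: numeral_eq_Suc)
qed

lemma three_edge_path_in_face:
  assumes "g \<in> F" "{x, y} \<in> E g" "{y, z} \<in> E g" "{z, w} \<in> E g" "x \<noteq> z" "y \<noteq> w"
  obtains j where "x = bd g ! (j mod 5)" "y = bd g ! ((j + 1) mod 5)"
      "z = bd g ! ((j + 2) mod 5)" "w = bd g ! ((j + 3) mod 5)"
    | j where "w = bd g ! (j mod 5)" "z = bd g ! ((j + 1) mod 5)"
      "y = bd g ! ((j + 2) mod 5)" "x = bd g ! ((j + 3) mod 5)"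
proof -
  obtain i where i: "i < 5" "y = bd g ! i"
    using face_vertex_index[OF assms(1) face_edge_endpoints(1)[OF assms(3)]] .
  note i5 = nat_less_5_cases[OF i(1)]
  obtain a where a: "x = bd g ! a" "a = Suc i mod 5 \<or> a = (i + 4) mod 5"
    using face_edge_at_index[OF assms(1) i(1)] assms(2) i(2) by (metis insert_commute)
  obtain b where b: "z = bd g ! b" "b = Suc i mod 5 \<or> b = (i + 4) mod 5"
    using face_edge_at_index[OF assms(1) i(1)] assms(3) i(2) by metis
  have "b < 5" using b(2) by auto
  then obtain c where c: "w = bd g ! c" "c = Suc b mod 5 \<or> c = (b + 4) mod 5"
    using face_edge_at_index[OF assms(1)] assms(4) b(1) by metis
  have wrap: "(Suc i mod 5 + 4) mod 5 = i" "Suc ((i + 4) mod 5) mod 5 = i"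
    using i5 by (elim disjE; simp)+
  have "a \<noteq> b" "c \<noteq> i" using assms(5,6) a(1) b(1) c(1) i(2) by auto
  moreover have "b = Suc i mod 5 \<and> a = (i + 4) mod 5 \<or> b = (i + 4) mod 5 \<and> a = Suc i mod 5"
    using a(2) b(2) \<open>a \<noteq> b\<close> by auto
  ultimately show ?thesis
  proof (elim disjE conjE)
    assume ab: "b = Suc i mod 5" "a = (i + 4) mod 5" and "c \<noteq> i"
    then have "c = Suc b mod 5" using c(2) wrap(1) by metis
    then have "a mod 5 = a \<and> (a + 1) mod 5 = i \<and> (a + 2) mod 5 = b \<and> (a + 3) mod 5 = c"
      using i5 ab by (elim disjE) simp_all
    then show ?thesis using that(1)[of a] a(1) b(1) c(1) i(2) by simp
  next
    assume ab: "b = (i + 4) mod 5" "a = Suc i mod 5" and "c \<noteq> i"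
    then have "c = (b + 4) mod 5" using c(2) wrap(2) by metis
    then have "c mod 5 = c \<and> (c + 1) mod 5 = b \<and> (c + 2) mod 5 = i \<and> (c + 3) mod 5 = a"
      using i5 ab by (elim disjE) simp_all
    then show ?thesis using that(2)[of c] a(1) b(1) c(1) i(2) by simp
  qed
qed

lemma path_diagonal_parallel:
  assumes "g \<in> F" "{x, y} \<in> E g" "{y, z} \<in> E g" "{z, w} \<in> E g" "x \<noteq> z" "y \<noteq> w"
  shows "p w - p x = (1 + 2 * cos (2 * pi / 5)) *\<^sub>R (p z - p y)"
proof -
  have diag: "p (bd g ! ((j + 3) mod 5)) - p (bd g ! (j mod 5))
      = (1 + 2 * cos (2 * pi / 5)) *\<^sub>R (p (bd g ! ((j + 2) mod 5)) - p (bd g ! ((j + 1) mod 5)))" for j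
    using regular_polygon_diagonal_parallel[OF face_regular[OF assms(1)], of 5 j] pentagonal assms(1)
    by simp
  show ?thesis
  proof (rule three_edge_path_in_face[OF assms])
    fix j
    assume "x = bd g ! (j mod 5)" "y = bd g ! ((j + 1) mod 5)"
      "z = bd g ! ((j + 2) mod 5)" "w = bd g ! ((j + 3) mod 5)"
    then show ?thesis using diag[of j] by simp
  next
    fix j
    assume "w = bd g ! (j mod 5)" "z = bd g ! ((j + 1) mod 5)"
      "y = bd g ! ((j + 2) mod 5)" "x = bd g ! ((j + 3) mod 5)"
    then have "p x - p w = (1 + 2 * cos (2 * pi / 5)) *\<^sub>R (p y - p z)" using diag[of j] by simp
    then show ?thesis by (metis minus_diff_eq scaleR_minus_right)
  qed
qed

lemma other_neighbour_in_face:
  assumes "g \<in> F" "{v, y} \<in> E g"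
  obtains z where "z \<noteq> y" "{v, z} \<in> E g"
proof -
  obtain x x' where "x \<noteq> x'" "{v, x} \<in> E g" "{v, x'} \<in> E g"
    using two_neighbours_in_face[OF assms(1) face_edge_endpoints(1)[OF assms(2)]] .
  then show ?thesis using that by metis
qed

lemma edges_at_vertex_in_face:
  assumes "g \<in> F" "v \<in> set (bd g)"
  shows "card {e \<in> E g. v \<in> e} = 2"
proof -
  obtain x y where xy: "x \<noteq> y" "{v, x} \<in> E g" "{v, y} \<in> E g"
    using two_neighbours_in_face[OF assms] .
  have "e \<in> {{v, x}, {v, y}}" if e: "e \<in> E g" "v \<in> e" for e
  proof -
    obtain a b where "e = {a, b}" using face_edge_vertices[OF e(1)] by metis
    then obtain w where w: "e = {v, w}" using e(2) by auto
    then have "w = x \<or> w = y" using neighbours_in_face[OF assms(1) xy(2,3)] xy(1) e(1) by blast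
    then show ?thesis using w by blast
  qed
  then have "{e \<in> E g. v \<in> e} = {{v, x}, {v, y}}" using xy by auto
  moreover have "{v, x} \<noteq> {v, y}" using xy(1) by (auto simp: doubleton_eq_iff)
  ultimately show ?thesis by simp
qed

lemma vdeg_eq_card_faces_at: "vdeg F bd v = card (N v)"
proof -
  define Ev where "Ev = {e \<in> rps_edges F bd. v \<in> e}"
  have "finite (rps_edges F bd)"
    unfolding rps_edges_def by (intro finite_UN_I finite_faces finite_face_edges)
  then have "finite Ev" unfolding Ev_def by simp
  have "card {g \<in> N v. e \<in> E g} = 2" if e: "e \<in> Ev" for e
  proof -
    obtain g where "g \<in> F" "e \<in> E g" using e unfolding Ev_def rps_edges_def by blast
    moreover have "v \<in> set (bd h)" if h: "e \<in> E h" for h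
    proof -
      obtain a b where "e = {a, b}" "a \<in> set (bd h)" "b \<in> set (bd h)" using face_edge_vertices[OF h] .
      then show ?thesis using e unfolding Ev_def by auto
    qed
    then have "{g \<in> N v. e \<in> E g} = {g \<in> F. e \<in> E g}" unfolding faces_at_def by auto
    ultimately show ?thesis using card_faces_on_edge by simp
  qed
  then have "(\<Sum>g\<in>N v. card {e \<in> Ev. e \<in> E g}) = 2 * card Ev"
    by (intro sum_multicount finite_faces_at \<open>finite Ev\<close>) blast
  moreover have "card {e \<in> Ev. e \<in> E g} = 2" if "g \<in> N v" for g
  proof -
    have "{e \<in> Ev. e \<in> E g} = {e \<in> E g. v \<in> e}"
      using that unfolding Ev_def rps_edges_def faces_at_def by auto
    then show ?thesis using that edges_at_vertex_in_face unfolding faces_at_def by simp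
  qed
  ultimately show ?thesis unfolding vdeg_def Ev_def[symmetric] by simp
qed

lemma three_le_card_faces_at:
  assumes "f \<in> F" "v \<in> set (bd f)"
  shows "3 \<le> card (N v)"
proof -
  obtain y z where yz: "y \<noteq> z" "{v, y} \<in> E f" "{v, z} \<in> E f"
    using two_neighbours_in_face[OF assms] .
  obtain Gy where Gy: "Gy \<in> F" "Gy \<noteq> f" "{v, y} \<in> E Gy" using face_across_edge[OF assms(1) yz(2)] .
  obtain Gz where Gz: "Gz \<in> F" "Gz \<noteq> f" "{v, z} \<in> E Gz" using face_across_edge[OF assms(1) yz(3)] .
  have "v \<noteq> y" "v \<noteq> z" using face_edge_endpoints_distinct assms(1) yz by blast+
  moreover have "{v, y, z} \<subseteq> set (bd f)"
    using face_edge_endpoints[OF yz(2)] face_edge_endpoints[OF yz(3)] by blast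
  moreover have "{v, y, z} \<subseteq> set (bd Gy)" if "Gy = Gz"
    using face_edge_endpoints[OF Gy(3)] face_edge_endpoints[OF Gz(3)] that by blast
  ultimately have "Gy \<noteq> Gz" using three_common_vertices_imp_eq[OF Gy(1) assms(1)] Gy(2) yz(1) by blast
  then have "card {f, Gy, Gz} = 3" using Gy(2) Gz(2) by auto
  moreover have "{f, Gy, Gz} \<subseteq> N v"
    using assms Gy(1) Gz(1) face_edge_endpoints(1)[OF Gy(3)] face_edge_endpoints(1)[OF Gz(3)]
    unfolding faces_at_def by blast
  ultimately show ?thesis using card_mono[OF finite_faces_at] by metis
qed

lemma third_edge_at_degree_three_vertex:
  assumes f: "f \<in> F" "{u, v} \<in> E f" "{v, w} \<in> E f" "u \<noteq> w"
    and Gu: "Gu \<in> F" "Gu \<noteq> f" "{u, v} \<in> E Gu"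
    and Gw: "Gw \<in> F" "Gw \<noteq> f" "{v, w} \<in> E Gw"
    and deg: "card (N v) = 3"
  obtains x where "{v, x} \<in> E Gu" "{v, x} \<in> E Gw" "x \<noteq> u" "x \<noteq> w"
proof -
  have "u \<noteq> v" "v \<noteq> w" using face_edge_endpoints_distinct f by blast+
  then have not_in_Gu: "w \<notin> set (bd Gu)"
    using three_common_vertices_imp_eq[OF Gu(1) f(1), of u v w] Gu(2) f(4)
      face_edge_endpoints[OF f(2)] face_edge_endpoints[OF f(3)] face_edge_endpoints[OF Gu(3)]
    by blast
  then have "Gu \<noteq> Gw" using face_edge_endpoints(2)[OF Gw(3)] by blast
  then have "card {f, Gu, Gw} = 3" using Gu(2) Gw(2) by auto
  moreover have "{f, Gu, Gw} \<subseteq> N v"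
    using f(1) Gu(1) Gw(1) face_edge_endpoints(2)[OF f(2)] face_edge_endpoints(2)[OF Gu(3)]
      face_edge_endpoints(1)[OF Gw(3)]
    unfolding faces_at_def by blast
  ultimately have faces: "N v = {f, Gu, Gw}"
    using card_subset_eq[OF finite_faces_at] deg by metis
  have "{v, u} \<in> E Gu" using Gu(3) by (simp add: insert_commute)
  then obtain x where x: "x \<noteq> u" "{v, x} \<in> E Gu" using other_neighbour_in_face[OF Gu(1)] by metis
  have "x \<noteq> w" using not_in_Gu face_edge_endpoints(2)[OF x(2)] by blast
  obtain H where H: "H \<in> F" "H \<noteq> Gu" "{v, x} \<in> E H" using face_across_edge[OF Gu(1) x(2)] .
  have "H \<in> N v" using H(1) face_edge_endpoints(1)[OF H(3)] unfolding faces_at_def by blast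
  moreover have "H \<noteq> f"
  proof
    assume "H = f"
    moreover have "{v, u} \<in> E f" using f(2) by (simp add: insert_commute)
    ultimately show False
      using neighbours_in_face[OF f(1) _ f(3) _ f(4)] H(3) x(1) \<open>x \<noteq> w\<close> by blast
  qed
  ultimately have "H = Gw" using faces H(2) by blast
  then show ?thesis using that x H(3) \<open>x \<noteq> w\<close> by blast
qed

lemma ring_images_meet:
  assumes f: "f \<in> F" and dist: "distinct [v0, v1, v2, v3, v4]"
    and e01: "{v0, v1} \<in> E f" and e12: "{v1, v2} \<in> E f" and e23: "{v2, v3} \<in> E f"
    and e34: "{v3, v4} \<in> E f" and e40: "{v4, v0} \<in> E f"
    and deg: "card (N v1) = 3" "card (N v2) = 3" "card (N v3) = 3" "card (N v4) = 3"
    and G0: "G0 \<in> F" "G0 \<noteq> f" "{v0, v1} \<in> E G0" and A: "{v0, A} \<in> E G0" "A \<noteq> v1"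
    and G4: "G4 \<in> F" "G4 \<noteq> f" "{v4, v0} \<in> E G4" and B: "{v0, B} \<in> E G4" "B \<noteq> v4"
  shows "p A = p B"
proof -
  obtain G1 where G1: "G1 \<in> F" "G1 \<noteq> f" "{v1, v2} \<in> E G1" using face_across_edge[OF f e12] .
  obtain G2 where G2: "G2 \<in> F" "G2 \<noteq> f" "{v2, v3} \<in> E G2" using face_across_edge[OF f e23] .
  obtain G3 where G3: "G3 \<in> F" "G3 \<noteq> f" "{v3, v4} \<in> E G3" using face_across_edge[OF f e34] .
  obtain x1 where x1: "{v1, x1} \<in> E G0" "{v1, x1} \<in> E G1" "x1 \<noteq> v0" "x1 \<noteq> v2"
    using third_edge_at_degree_three_vertex[OF f e01 e12 _ G0 G1 deg(1)] dist by auto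
  obtain x2 where x2: "{v2, x2} \<in> E G1" "{v2, x2} \<in> E G2" "x2 \<noteq> v1" "x2 \<noteq> v3"
    using third_edge_at_degree_three_vertex[OF f e12 e23 _ G1 G2 deg(2)] dist by auto
  obtain x3 where x3: "{v3, x3} \<in> E G2" "{v3, x3} \<in> E G3" "x3 \<noteq> v2" "x3 \<noteq> v4"
    using third_edge_at_degree_three_vertex[OF f e23 e34 _ G2 G3 deg(3)] dist by auto
  obtain x4 where x4: "{v4, x4} \<in> E G3" "{v4, x4} \<in> E G4" "x4 \<noteq> v3" "x4 \<noteq> v0"
    using third_edge_at_degree_three_vertex[OF f e34 e40 _ G3 G4 deg(4)] dist by auto
  define \<phi> :: real where "\<phi> = 1 + 2 * cos (2 * pi / 5)"
  have s0: "p x1 - p A = \<phi> *\<^sub>R (p v1 - p v0)"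
    using path_diagonal_parallel[OF G0(1), of A v0 v1 x1] A G0(3) x1 dist unfolding \<phi>_def
    by (simp add: insert_commute)
  have s1: "p x2 - p x1 = \<phi> *\<^sub>R (p v2 - p v1)"
    using path_diagonal_parallel[OF G1(1), of x1 v1 v2 x2] G1(3) x1 x2 unfolding \<phi>_def
    by (simp add: insert_commute)
  have s2: "p x3 - p x2 = \<phi> *\<^sub>R (p v3 - p v2)"
    using path_diagonal_parallel[OF G2(1), of x2 v2 v3 x3] G2(3) x2 x3 unfolding \<phi>_def
    by (simp add: insert_commute)
  have s3: "p x4 - p x3 = \<phi> *\<^sub>R (p v4 - p v3)"
    using path_diagonal_parallel[OF G3(1), of x3 v3 v4 x4] G3(3) x3 x4 unfolding \<phi>_def
    by (simp add: insert_commute)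
  have s4: "p B - p x4 = \<phi> *\<^sub>R (p v0 - p v4)"
    using path_diagonal_parallel[OF G4(1), of x4 v4 v0 B] G4(3) x4 B dist unfolding \<phi>_def
    by (simp add: insert_commute)
  have "p B - p A = (p B - p x4) + (p x4 - p x3) + (p x3 - p x2) + (p x2 - p x1) + (p x1 - p A)"
    by simp
  also have "\<dots> = \<phi> *\<^sub>R
      ((p v0 - p v4) + (p v4 - p v3) + (p v3 - p v2) + (p v2 - p v1) + (p v1 - p v0))"
    unfolding s0 s1 s2 s3 s4 by (simp only: scaleR_add_right)
  also have "\<dots> = 0" by simp
  finally show ?thesis by simp
qed

lemma ring_vertices_meet:
  assumes f: "f \<in> F" "{v0, v1} \<in> E f" "{v0, v4} \<in> E f"
    and G0: "G0 \<in> F" "G0 \<noteq> f" "{v0, v1} \<in> E G0" and A: "{v0, A} \<in> E G0" "A \<noteq> v1"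
    and G4: "G4 \<in> F" "G4 \<noteq> f" "{v0, v4} \<in> E G4" and B: "{v0, B} \<in> E G4" "B \<noteq> v4"
    and "G0 \<noteq> G4" and "p A = p B"
  shows "A = B"
proof -
  define I where "I = set (bd G0) \<inter> set (bd G4)"
  have "v0 \<in> I"
    unfolding I_def using face_edge_endpoints(1)[OF G0(3)] face_edge_endpoints(1)[OF G4(3)] by blast
  then consider "I = {v0}" | "I \<in> E G0" "I \<in> E G4"
    using face_intersection_cases[OF G0(1) G4(1) \<open>G0 \<noteq> G4\<close>, folded I_def] by blast
  then show ?thesis
  proof cases
    case 1
    have "p A \<in> convex hull (p ` set (bd G0))" "p B \<in> convex hull (p ` set (bd G4))"
      using face_edge_endpoints(2)[OF A(1)] face_edge_endpoints(2)[OF B(1)] by (simp_all add: hull_inc)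
    then have "p A \<in> convex hull (p ` set (bd G0)) \<inter> convex hull (p ` set (bd G4))"
      using \<open>p A = p B\<close> by simp
    also have "\<dots> = {p v0}"
      using face_hull_intersection[OF G0(1) G4(1) \<open>G0 \<noteq> G4\<close>] 1 unfolding I_def by simp
    finally show ?thesis using face_edge_images_distinct[OF G0(1) A(1)] by simp
  next
    case 2
    then obtain y where y: "I = {v0, y}" using face_edge_at_vertex \<open>v0 \<in> I\<close> by metis
    have "y = v1 \<or> y = A"
      using neighbours_in_face[OF G0(1) G0(3) A(1) _ A(2)[symmetric]] 2(1) y by blast
    moreover have "y = v4 \<or> y = B"
      using neighbours_in_face[OF G4(1) G4(3) B(1) _ B(2)[symmetric]] 2(2) y by blast
    moreover have "{v0, v1} \<notin> E G4"
      using faces_on_edge[OF f(1) G0(1) G0(2)[symmetric] f(2) G0(3) G4(1)] G4(2) \<open>G0 \<noteq> G4\<close>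
      by blast
    moreover have "{v0, v4} \<notin> E G0"
      using faces_on_edge[OF f(1) G4(1) G4(2)[symmetric] f(3) G4(3) G0(1)] G0(2) \<open>G0 \<noteq> G4\<close>
      by blast
    ultimately show ?thesis using 2 y by auto
  qed
qed

lemma faces_at_eq_ring:
  assumes f: "f \<in> F" "{v0, v1} \<in> E f" "{v0, v4} \<in> E f" "v1 \<noteq> v4"
    and G0: "G0 \<in> F" "G0 \<noteq> f" "{v0, v1} \<in> E G0" "{v0, A} \<in> E G0" "A \<noteq> v1"
    and G4: "G4 \<in> F" "G4 \<noteq> f" "{v0, v4} \<in> E G4" "{v0, A} \<in> E G4" "A \<noteq> v4"
    and "G0 \<noteq> G4"
  shows "N v0 = {f, G0, G4}"
proof (rule faces_at_eq_if_closed[symmetric])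
  show "{f, G0, G4} \<subseteq> N v0"
    using f(1) G0(1) G4(1) face_edge_endpoints(1)[OF f(2)] face_edge_endpoints(1)[OF G0(3)]
      face_edge_endpoints(1)[OF G4(3)]
    unfolding faces_at_def by blast
next
  fix g e assume g: "g \<in> {f, G0, G4}" and e: "e \<in> E g" "v0 \<in> e"
  then obtain w where w: "e = {v0, w}" using face_edge_at_vertex by metis
  from g consider "g = f" | "g = G0" | "g = G4" by blast
  then show "\<exists>h\<in>{f, G0, G4}. h \<noteq> g \<and> e \<in> E h"
  proof cases
    case 1
    then have "w = v1 \<or> w = v4" using neighbours_in_face[OF f(1,2,3)] f(4) e(1) w by blast
    then show ?thesis using 1 w G0 G4 by blast
  next
    case 2
    then have "w = v1 \<or> w = A" using neighbours_in_face[OF G0(1,3,4)] G0(5) e(1) w by metis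
    then show ?thesis using 2 w f G0(2) G4 \<open>G0 \<noteq> G4\<close> by auto
  next
    case 3
    then have "w = v4 \<or> w = A" using neighbours_in_face[OF G4(1,3,4)] G4(5) e(1) w by metis
    then show ?thesis using 3 w f G0 G4(2) \<open>G0 \<noteq> G4\<close> by auto
  qed
qed blast

lemma degree_three_propagates:
  assumes f: "f \<in> F" "v0 \<in> set (bd f)" and deg: "\<forall>v\<in>set (bd f) - {v0}. card (N v) = 3"
  shows "card (N v0) = 3"
proof -
  obtain v1 v2 v3 v4 where dist: "distinct [v0, v1, v2, v3, v4]"
    and e: "{v0, v1} \<in> E f" "{v1, v2} \<in> E f" "{v2, v3} \<in> E f" "{v3, v4} \<in> E f" "{v4, v0} \<in> E f"
    using pentagon_around_vertex[OF f] .
  have "card (N v1) = 3" "card (N v2) = 3" "card (N v3) = 3" "card (N v4) = 3"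
    using deg dist face_edge_endpoints[OF e(2)] face_edge_endpoints[OF e(4)] by auto
  note ring = ring_images_meet[OF f(1) dist e this]
  have e04: "{v0, v4} \<in> E f" using e(5) by (simp add: insert_commute)
  obtain G0 where G0: "G0 \<in> F" "G0 \<noteq> f" "{v0, v1} \<in> E G0" using face_across_edge[OF f(1) e(1)] .
  obtain G4 where G4: "G4 \<in> F" "G4 \<noteq> f" "{v0, v4} \<in> E G4" using face_across_edge[OF f(1) e04] .
  obtain A where A: "A \<noteq> v1" "{v0, A} \<in> E G0" using other_neighbour_in_face[OF G0(1,3)] .
  obtain B where B: "B \<noteq> v4" "{v0, B} \<in> E G4" using other_neighbour_in_face[OF G4(1,3)] .
  have "G0 \<noteq> G4"
    using three_common_vertices_imp_eq[OF G0(1) f(1), of v0 v1 v4] G0(2) dist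
      face_edge_endpoints[OF G0(3)] face_edge_endpoints[OF G4(3)] face_edge_endpoints[OF e(1)]
      face_edge_endpoints[OF e04]
    by auto
  moreover have "p A = p B" using ring G0 A G4 B by (simp add: insert_commute)
  ultimately have "A = B" using ring_vertices_meet[OF f(1) e(1) e04 G0 A(2,1) G4 B(2,1)] by blast
  then have "N v0 = {f, G0, G4}"
    using faces_at_eq_ring[OF f(1) e(1) e04 _ G0 A(2,1) G4] B \<open>G0 \<noteq> G4\<close> dist by auto
  then show ?thesis using G0(2) G4(2) \<open>G0 \<noteq> G4\<close> by auto
qed

lemma vertex_curvature_eq: "vertex_curvature F bd v = 2 * pi - card (N v) * (3 * pi / 5)"
proof -
  have "(\<Sum>g\<in>N v. reg_angle (length (bd g))) = (\<Sum>g\<in>N v. 3 * pi / 5)"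
    using pentagonal by (intro sum.cong) (auto simp: faces_at_def reg_angle_def)
  then show ?thesis unfolding vertex_curvature_def by simp
qed

lemma curvature_share_eq:
  assumes "f \<in> F" "v \<in> set (bd f)"
  shows "vertex_curvature F bd v / vdeg F bd v = 2 * pi / card (N v) - 3 * pi / 5"
  using three_le_card_faces_at[OF assms]
  unfolding vertex_curvature_eq vdeg_eq_card_faces_at by (simp add: field_simps)

lemma curvature_share_le:
  assumes "f \<in> F" "v \<in> set (bd f)"
  shows "vertex_curvature F bd v / vdeg F bd v \<le> (if card (N v) = 3 then pi / 15 else - pi / 10)"
proof -
  have "3 \<le> card (N v)" using three_le_card_faces_at[OF assms] .
  then have "2 * pi / card (N v) \<le> 2 * pi / (if card (N v) = 3 then 3 else 4)"
    by (intro divide_left_mono) auto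
  then show ?thesis unfolding curvature_share_eq[OF assms] by (auto split: if_splits)
qed

lemma facial_curvature_nonpos_if_degree_ne_three:
  assumes f: "f \<in> F" "v \<in> set (bd f)" and deg: "card (N v) \<noteq> 3"
  shows "facial_curvature F bd f \<le> 0"
proof -
  obtain v' where v': "v' \<in> set (bd f)" "v' \<noteq> v" "card (N v') \<noteq> 3"
    using degree_three_propagates[OF f] deg by blast
  define V where "V = set (bd f)"
  have "card V = 5" using face_distinct[OF f(1)] pentagonal f(1) unfolding V_def by (simp add: distinct_card)
  moreover have "{v, v'} \<subseteq> V" using f(2) v'(1) unfolding V_def by blast
  ultimately have card: "card (V \<inter> {v, v'}) = 2" "card (V - {v, v'}) = 3"
    using v'(2) by (simp_all add: Int_absorb1 card_Diff_subset)
  define t where "t u = vertex_curvature F bd u / vdeg F bd u" for u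
  have "t u \<le> (if u \<in> {v, v'} then - pi / 10 else pi / 15)" if "u \<in> V" for u
    using curvature_share_le[OF f(1), of u, folded t_def] that deg v'(3)
    unfolding V_def by (auto split: if_splits) (use pi_gt_zero in linarith)
  then have "facial_curvature F bd f \<le> (\<Sum>u\<in>V. if u \<in> {v, v'} then - pi / 10 else pi / 15)"
    unfolding facial_curvature_def V_def[symmetric] t_def[symmetric] by (rule sum_mono)
  also have "\<dots> = (\<Sum>u\<in>V \<inter> {v, v'}. - pi / 10) + (\<Sum>u\<in>V - {v, v'}. pi / 15)"
    unfolding V_def by (subst sum.If_cases) (simp_all only: Collect_mem_eq Diff_eq finite_set)
  also have "\<dots> = 0" using card by simp
  finally show ?thesis by simp
qed

end

theorem lemma2p2:
  fixes F :: "'f set" and bd :: "'f \<Rightarrow> 'v list" and p :: "'v \<Rightarrow> real^3" and f :: 'f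
  assumes "is_rps F bd p"
    and "\<forall>g\<in>F. length (bd g) = 5"
    and "f \<in> F"
  shows "(facial_curvature F bd f > 0 \<longrightarrow> (\<forall>v\<in>set (bd f). vdeg F bd v = 3)) \<and>
         ((\<exists>v\<in>set (bd f). vertex_curvature F bd v < 0) \<longrightarrow> facial_curvature F bd f \<le> 0)"
proof -
  interpret pentagonal_surface F bd p
    using assms(1,2) by unfold_locales
  have nonpos: "facial_curvature F bd f \<le> 0" if "v \<in> set (bd f)" "card (N v) \<noteq> 3" for v
    using facial_curvature_nonpos_if_degree_ne_three[OF assms(3) that] .
  have "card (N v) \<noteq> 3" if "vertex_curvature F bd v < 0" for v
    using that pi_gt_zero unfolding vertex_curvature_eq by auto
  then show ?thesis using nonpos vdeg_eq_card_faces_at by fastforce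
qed

end
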